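(* Let $F_1,\dots,F_n\subset\mathbb{R}^d$ be sets of $t$ points each, with elements ordered as $F_j=\{z(j)_1,\dots,z(j)_t\}$, let $k\le t$, and let $(A_1,\dots,A_k)$ be a colourful $k$-partition of them with function representation $(\sigma_1,\dots,\sigma_n)$. Then for real coefficients $\alpha_1,\dots,\alpha_n$, the point $\sum_{j=1}^n\alpha_j x^i_j$ is the same for all $i=1,\dots,k$ if and only if $\sum_{j=1}^n\alpha_j F_j(\sigma_j)=0$.
   Context: A colourful $k$-partition of colour classes $F_1,\dots,F_n$ is a family of $k$ pairwise disjoint sets $A_1,\dots,A_k$ each containing exactly one point of each $F_j$; write $A_i=\{x^i_j: x^i_j\in F_j\}$. Let $\Sigma_{k,t}$ be the set of injective maps $[k]=\{1,\dots,k\}\to[t]$. The function representation of $(A_1,\dots,A_k)$ is $(\sigma_1,\dots,\sigma_n)\in(\Sigma_{k,t})^n$ defined by $\sigma_j(i)=m$ iff $x^i_j=z(j)_m$. Let $u_1,\dots,u_k$ be the vertices of a regular simplex in $\mathbb{R}^{k-1}$ centred at the origin. For $\sigma\in\Sigma_{k,t}$ define $F_j(\sigma)=\sum_{i=1}^k u_i\otimes z(j)_{\sigma(i)}\in\mathbb{R}^{k-1}\otimes\mathbb{R}^d\cong\mathbb{R}^{(k-1)d}$, where $\otimes$ is the tensor product. *)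

theory Defs
  imports "HOL-Analysis.Analysis"
begin

text \<open>Vectors of R^(k-1) are represented as functions nat => real vanishing at
  coordinates l >= k-1.  A regular simplex u_1..u_k in R^(k-1) centred at the origin.\<close>
definition regular_simplex :: "nat \<Rightarrow> (nat \<Rightarrow> nat \<Rightarrow> real) \<Rightarrow> bool" where
  "regular_simplex k u \<longleftrightarrow>
     (\<forall>i\<in>{1..k}. \<forall>l. l \<ge> k - 1 \<longrightarrow> u i l = 0) \<and>
     (\<forall>l. (\<Sum>i=1..k. u i l) = 0) \<and>
     (\<exists>c>0. \<forall>i\<in>{1..k}. \<forall>i'\<in>{1..k}. i \<noteq> i' \<longrightarrow>
              (\<Sum>l<k-1. (u i l - u i' l)^2) = c)"

definition Sigma_kt :: "nat \<Rightarrow> nat \<Rightarrow> (nat \<Rightarrow> nat) set" where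
  "Sigma_kt k t = {\<sigma>. inj_on \<sigma> {1..k} \<and> \<sigma> ` {1..k} \<subseteq> {1..t}}"

definition colour_class :: "(nat \<Rightarrow> nat \<Rightarrow> 'a) \<Rightarrow> nat \<Rightarrow> nat \<Rightarrow> 'a set" where
  "colour_class z t j = z j ` {1..t}"

definition colourful_partition ::
  "(nat \<Rightarrow> nat \<Rightarrow> 'a) \<Rightarrow> nat \<Rightarrow> nat \<Rightarrow> nat \<Rightarrow> (nat \<Rightarrow> 'a set) \<Rightarrow> bool" where
  "colourful_partition z t n k A \<longleftrightarrow>
     (\<forall>i\<in>{1..k}. \<forall>i'\<in>{1..k}. i \<noteq> i' \<longrightarrow> A i \<inter> A i' = {}) \<and>
     (\<forall>i\<in>{1..k}. \<forall>j\<in>{1..n}. card (A i \<inter> colour_class z t j) = 1)"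

definition cpoint :: "(nat \<Rightarrow> nat \<Rightarrow> 'a) \<Rightarrow> nat \<Rightarrow> (nat \<Rightarrow> 'a set) \<Rightarrow> nat \<Rightarrow> nat \<Rightarrow> 'a" where
  "cpoint z t A i j = (THE x. x \<in> A i \<inter> colour_class z t j)"

definition function_representation ::
  "(nat \<Rightarrow> nat \<Rightarrow> 'a) \<Rightarrow> nat \<Rightarrow> nat \<Rightarrow> nat \<Rightarrow> (nat \<Rightarrow> 'a set) \<Rightarrow> (nat \<Rightarrow> nat \<Rightarrow> nat) \<Rightarrow> bool" where
  "function_representation z t n k A \<sigma> \<longleftrightarrow>
     (\<forall>j\<in>{1..n}. \<sigma> j \<in> Sigma_kt k t \<and>
        (\<forall>i\<in>{1..k}. \<forall>m\<in>{1..t}. \<sigma> j i = m \<longleftrightarrow> cpoint z t A i j = z j m))"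

text \<open>R^(k-1) (x) R^d is identified with (R^d)^(k-1) via v (x) w = (v_l *R w)_l.
  F_j(sigma) = sum_i u_i (x) z(j)_{sigma(i)}, given by its coordinates l < k-1.\<close>
definition tensor :: "(nat \<Rightarrow> real) \<Rightarrow> 'a::real_vector \<Rightarrow> nat \<Rightarrow> 'a" where
  "tensor v w = (\<lambda>l. v l *\<^sub>R w)"

definition Fsig :: "nat \<Rightarrow> (nat \<Rightarrow> nat \<Rightarrow> real) \<Rightarrow> (nat \<Rightarrow> nat \<Rightarrow> 'a::real_vector) \<Rightarrow> nat \<Rightarrow> (nat \<Rightarrow> nat) \<Rightarrow> nat \<Rightarrow> 'a" where
  "Fsig k u z j \<sigma> = (\<lambda>l. \<Sum>i=1..k. tensor (u i) (z j (\<sigma> i)) l)"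

end

theory Submission
  imports Defs
begin

text \<open>Write \<open>y\<^sub>i = \<Sum>\<^sub>j \<alpha>\<^sub>j x\<^sup>i\<^sub>j\<close>. By bilinearity of the tensor product,
  \<open>\<Sum>\<^sub>j \<alpha>\<^sub>j F\<^sub>j(\<sigma>\<^sub>j) = \<Sum>\<^sub>i u\<^sub>i \<otimes> y\<^sub>i\<close>, so the claim is that \<open>\<Sum>\<^sub>i u\<^sub>i \<otimes> y\<^sub>i = 0\<close> exactly
  when all \<open>y\<^sub>i\<close> coincide. One direction is \<open>\<Sum>\<^sub>i u\<^sub>i = 0\<close>. For the other, contract
  with \<open>u\<^sub>m - u\<^sub>p\<close>: the vertices of a centred regular simplex all have the same norm, hence
  \<open>\<langle>u\<^sub>m - u\<^sub>p, u\<^sub>i\<rangle> = (c/2)([i = m] - [i = p])\<close> with \<open>c\<close> the squared edge length, and the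
  contraction equals \<open>(c/2)(y\<^sub>m - y\<^sub>p)\<close>.\<close>

lemma equidistant_centred_norms_eq:
  fixes u :: "'i \<Rightarrow> 'l \<Rightarrow> real"
  assumes "finite K" "finite L"
    and centred: "\<forall>l\<in>L. (\<Sum>i\<in>K. u i l) = 0"
    and equidistant: "\<forall>i\<in>K. \<forall>i'\<in>K. i \<noteq> i' \<longrightarrow> (\<Sum>l\<in>L. (u i l - u i' l)\<^sup>2) = c"
    and "m \<in> K" "p \<in> K"
  shows "(\<Sum>l\<in>L. (u m l)\<^sup>2) = (\<Sum>l\<in>L. (u p l)\<^sup>2)"
proof -
  define N where "N a = (\<Sum>l\<in>L. (u a l)\<^sup>2)" for a
  have dist_sum: "(\<Sum>i\<in>K. \<Sum>l\<in>L. (u a l - u i l)\<^sup>2) = real (card K) * N a + (\<Sum>i\<in>K. N i)" for a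
  proof -
    have "(\<Sum>i\<in>K. \<Sum>l\<in>L. u a l * u i l) = (\<Sum>l\<in>L. u a l * (\<Sum>i\<in>K. u i l))"
      by (simp add: sum_distrib_left sum.swap[of _ K])
    also have "\<dots> = 0" using centred by simp
    finally have "(\<Sum>i\<in>K. \<Sum>l\<in>L. u a l * u i l) = 0" .
    then show ?thesis
      by (simp add: N_def power2_diff sum.distrib sum_subtractf mult.assoc sum_distrib_left[symmetric])
  qed
  have "(\<Sum>i\<in>K. \<Sum>l\<in>L. (u a l - u i l)\<^sup>2) = real (card K - 1) * c" if "a \<in> K" for a
  proof -
    have "(\<Sum>i\<in>K. \<Sum>l\<in>L. (u a l - u i l)\<^sup>2) = (\<Sum>i\<in>K - {a}. \<Sum>l\<in>L. (u a l - u i l)\<^sup>2)"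
      using \<open>finite K\<close> that by (simp add: sum.remove)
    also have "\<dots> = (\<Sum>i\<in>K - {a}. c)"
      using equidistant that by (intro sum.cong) auto
    finally show ?thesis using \<open>finite K\<close> that by simp
  qed
  then have "real (card K) * N m = real (card K) * N p"
    using dist_sum[of m] dist_sum[of p] \<open>m \<in> K\<close> \<open>p \<in> K\<close> by simp
  moreover have "card K > 0" using \<open>finite K\<close> \<open>m \<in> K\<close> card_gt_0_iff by blast
  ultimately show ?thesis unfolding N_def by simp
qed

lemma equidistant_centred_inner_edge:
  fixes u :: "'i \<Rightarrow> 'l \<Rightarrow> real"
  assumes "finite K" "finite L"
    and centred: "\<forall>l\<in>L. (\<Sum>i\<in>K. u i l) = 0"
    and equidistant: "\<forall>i\<in>K. \<forall>i'\<in>K. i \<noteq> i' \<longrightarrow> (\<Sum>l\<in>L. (u i l - u i' l)\<^sup>2) = c"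
    and "m \<in> K" "p \<in> K" "i \<in> K"
  shows "(\<Sum>l\<in>L. (u m l - u p l) * u i l) = (if i = m then c/2 else 0) - (if i = p then c/2 else 0)"
proof -
  have norms: "(\<Sum>l\<in>L. (u a l)\<^sup>2) = (\<Sum>l\<in>L. (u i l)\<^sup>2)" if "a \<in> K" for a
    using equidistant_centred_norms_eq[OF assms(1-4)] that \<open>i \<in> K\<close> by blast
  have dist: "(\<Sum>l\<in>L. (u a l - u i l)\<^sup>2) = (if i = a then 0 else c)" if "a \<in> K" for a
    using equidistant that \<open>i \<in> K\<close> by auto
  have polarize: "(\<Sum>l\<in>L. u a l * u i l)
      = ((\<Sum>l\<in>L. (u a l)\<^sup>2) + (\<Sum>l\<in>L. (u i l)\<^sup>2) - (\<Sum>l\<in>L. (u a l - u i l)\<^sup>2)) / 2" for a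
    by (simp add: power2_diff sum.distrib sum_subtractf mult.assoc sum_distrib_left[symmetric])
  have "(\<Sum>l\<in>L. (u m l - u p l) * u i l) = (\<Sum>l\<in>L. u m l * u i l) - (\<Sum>l\<in>L. u p l * u i l)"
    by (simp add: left_diff_distrib sum_subtractf)
  also have "\<dots> = ((\<Sum>l\<in>L. (u p l - u i l)\<^sup>2) - (\<Sum>l\<in>L. (u m l - u i l)\<^sup>2)) / 2"
    unfolding polarize using norms \<open>m \<in> K\<close> \<open>p \<in> K\<close> by (simp add: field_simps)
  finally show ?thesis using dist \<open>m \<in> K\<close> \<open>p \<in> K\<close> by auto
qed

lemma equidistant_centred_tensor_sum_eq_0_imp_eq:
  fixes u :: "'i \<Rightarrow> 'l \<Rightarrow> real" and y :: "'i \<Rightarrow> 'a::real_vector"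
  assumes "finite K" "finite L"
    and centred: "\<forall>l\<in>L. (\<Sum>i\<in>K. u i l) = 0"
    and equidistant: "\<forall>i\<in>K. \<forall>i'\<in>K. i \<noteq> i' \<longrightarrow> (\<Sum>l\<in>L. (u i l - u i' l)\<^sup>2) = c"
    and "c \<noteq> 0"
    and vanish: "\<forall>l\<in>L. (\<Sum>i\<in>K. u i l *\<^sub>R y i) = 0"
    and m: "m \<in> K" and p: "p \<in> K"
  shows "y m = y p"
proof (cases "m = p")
  case False
  have "0 = (\<Sum>l\<in>L. (u m l - u p l) *\<^sub>R (\<Sum>i\<in>K. u i l *\<^sub>R y i))"
    using vanish by simp
  also have "\<dots> = (\<Sum>l\<in>L. \<Sum>i\<in>K. ((u m l - u p l) * u i l) *\<^sub>R y i)"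
    by (simp add: scaleR_sum_right)
  also have "\<dots> = (\<Sum>i\<in>K. (\<Sum>l\<in>L. (u m l - u p l) * u i l) *\<^sub>R y i)"
    unfolding scaleR_sum_left by (rule sum.swap)
  also have "\<dots> = (\<Sum>i\<in>K. ((if i = m then c/2 else 0) - (if i = p then c/2 else 0)) *\<^sub>R y i)"
    using equidistant_centred_inner_edge[OF assms(1-4) m p] by (intro sum.cong) auto
  also have "\<dots> = (c/2) *\<^sub>R (y m - y p)"
    using \<open>finite K\<close> m p
    by (simp add: scaleR_left_diff_distrib sum_subtractf scaleR_diff_right
        if_distrib[of "\<lambda>a. a *\<^sub>R b" for b] cong: if_cong)
  finally show ?thesis using \<open>c \<noteq> 0\<close> by simp
qed simp

lemma regular_simplex_sum_eq_0:
  assumes "regular_simplex k u"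
  shows "(\<Sum>i=1..k. u i l) = 0"
  using assms by (simp add: regular_simplex_def)

lemma regular_simplex_tensor_sum_eq_0_iff:
  fixes y :: "nat \<Rightarrow> 'a::real_vector"
  assumes simplex: "regular_simplex k u"
  shows "(\<forall>l<k-1. (\<Sum>i=1..k. u i l *\<^sub>R y i) = 0) \<longleftrightarrow> (\<forall>m\<in>{1..k}. \<forall>p\<in>{1..k}. y m = y p)"
proof
  assume "\<forall>l<k-1. (\<Sum>i=1..k. u i l *\<^sub>R y i) = 0"
  then have vanish: "\<forall>l\<in>{..<k-1}. (\<Sum>i=1..k. u i l *\<^sub>R y i) = 0"
    by simp
  have centred: "\<forall>l\<in>{..<k-1}. (\<Sum>i=1..k. u i l) = 0"
    using regular_simplex_sum_eq_0[OF simplex] by blast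
  obtain c where "c > 0"
    and equidistant: "\<forall>i\<in>{1..k}. \<forall>i'\<in>{1..k}. i \<noteq> i' \<longrightarrow> (\<Sum>l<k-1. (u i l - u i' l)\<^sup>2) = c"
    using simplex unfolding regular_simplex_def by (elim conjE exE)
  have "y m = y p" if "m \<in> {1..k}" "p \<in> {1..k}" for m p
    using equidistant_centred_tensor_sum_eq_0_imp_eq[OF _ _ centred equidistant _ vanish that] \<open>c > 0\<close>
    by simp
  then show "\<forall>m\<in>{1..k}. \<forall>p\<in>{1..k}. y m = y p"
    by blast
next
  assume const: "\<forall>m\<in>{1..k}. \<forall>p\<in>{1..k}. y m = y p"
  have "(\<Sum>i=1..k. u i l *\<^sub>R y i) = 0" for l
  proof -
    have "u i l *\<^sub>R y i = u i l *\<^sub>R y 1" if "i \<in> {1..k}" for i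
      using const that by (metis atLeastAtMost_iff le_refl order.trans)
    then have "(\<Sum>i=1..k. u i l *\<^sub>R y i) = (\<Sum>i=1..k. u i l *\<^sub>R y 1)"
      by (rule sum.cong[OF refl])
    also have "\<dots> = (\<Sum>i=1..k. u i l) *\<^sub>R y 1"
      by (rule scaleR_sum_left[symmetric])
    finally show ?thesis
      using regular_simplex_sum_eq_0[OF simplex] by simp
  qed
  then show "\<forall>l<k-1. (\<Sum>i=1..k. u i l *\<^sub>R y i) = 0"
    by blast
qed

lemma function_representation_cpoint:
  assumes "function_representation z t n k A \<sigma>" "i \<in> {1..k}" "j \<in> {1..n}"
  shows "cpoint z t A i j = z j (\<sigma> j i)"
proof -
  have "\<sigma> j i \<in> {1..t}"
    using assms unfolding function_representation_def Sigma_kt_def by blast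
  then show ?thesis
    using assms unfolding function_representation_def by blast
qed

lemma sum_scaleR_Fsig:
  "(\<Sum>j\<in>J. \<alpha> j *\<^sub>R Fsig k u z j (\<sigma> j) l) = (\<Sum>i=1..k. u i l *\<^sub>R (\<Sum>j\<in>J. \<alpha> j *\<^sub>R z j (\<sigma> j i)))"
  unfolding Fsig_def tensor_def
  by (simp add: scaleR_sum_right sum.swap[of _ J] mult.commute)

theorem lemma1:
  fixes z :: "nat \<Rightarrow> nat \<Rightarrow> real^'d" and n t k :: nat
    and u :: "nat \<Rightarrow> nat \<Rightarrow> real"
    and A :: "nat \<Rightarrow> (real^'d) set" and \<sigma> :: "nat \<Rightarrow> nat \<Rightarrow> nat"
    and \<alpha> :: "nat \<Rightarrow> real"
  assumes "\<forall>j\<in>{1..n}. inj_on (z j) {1..t}"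
    and "k \<le> t"
    and "regular_simplex k u"
    and "colourful_partition z t n k A"
    and "function_representation z t n k A \<sigma>"
  shows "(\<forall>i\<in>{1..k}. \<forall>i'\<in>{1..k}.
            (\<Sum>j=1..n. \<alpha> j *\<^sub>R cpoint z t A i j) = (\<Sum>j=1..n. \<alpha> j *\<^sub>R cpoint z t A i' j))
         \<longleftrightarrow> (\<forall>l<k-1. (\<Sum>j=1..n. \<alpha> j *\<^sub>R Fsig k u z j (\<sigma> j) l) = 0)"
proof -
  define y where "y i = (\<Sum>j=1..n. \<alpha> j *\<^sub>R cpoint z t A i j)" for i
  have "(\<Sum>j=1..n. \<alpha> j *\<^sub>R Fsig k u z j (\<sigma> j) l) = (\<Sum>i=1..k. u i l *\<^sub>R y i)" for l
    unfolding sum_scaleR_Fsig y_def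
    using function_representation_cpoint[OF assms(5)] by (intro sum.cong refl arg_cong2[where f = scaleR]) auto
  then show ?thesis
    using regular_simplex_tensor_sum_eq_0_iff[OF assms(3), of y] unfolding y_def by simp
qed

end
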